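(* For every integer $d\ge0$, $\|B^{(d)}\|_\infty:=\sup_{k\ge0}\sum_{\ell\ge0}|b^{(d)}_{k,\ell}|\le 3d+2$.
   Context: Let $\{p_k\}_{k\ge0}$ be the orthonormal Legendre polynomials on $[-1,1]$: $p_k$ has exact degree $k$, positive leading coefficient, and $\int_{-1}^1 p_k(t)p_\ell(t)\,dt=\delta_{k\ell}$. Let $\Theta$ be the Heaviside function, $\Theta(x)=0$ for $x<0$ and $\Theta(x)=1$ for $x\ge0$. The Legendre basis matrix of degree $d$ is the infinite matrix $B^{(d)}=[b^{(d)}_{k,\ell}]_{k,\ell\ge0}$ with $b^{(d)}_{k,\ell}=\int_{-1}^1\int_{-1}^1 p_d(\tau)\Theta(\tau-\rho)p_k(\tau)p_\ell(\rho)\,d\rho\,d\tau$, i.e. the coefficient matrix of $p_d(t)\Theta(t-s)$. *)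

theory Defs
  imports "HOL-Analysis.Analysis" "HOL-Computational_Algebra.Polynomial"
begin

definition heaviside :: "real \<Rightarrow> real" where
  "heaviside x = (if x < 0 then 0 else 1)"

text \<open>A family of polynomials is the orthonormal Legendre family on [-1,1]:
  exact degree k, positive leading coefficient, orthonormal w.r.t. the
  Lebesgue (here Henstock--Kurzweil, equivalent for polynomials) integral on [-1,1].\<close>
definition orthonormal_legendre :: "(nat \<Rightarrow> real poly) \<Rightarrow> bool" where
  "orthonormal_legendre p \<longleftrightarrow>
     (\<forall>k. degree (p k) = k \<and> lead_coeff (p k) > 0) \<and>
     (\<forall>k l. integral {-1..1} (\<lambda>t. poly (p k) t * poly (p l) t) = (if k = l then 1 else 0))"

definition legendre_basis_entry :: "(nat \<Rightarrow> real poly) \<Rightarrow> nat \<Rightarrow> nat \<Rightarrow> nat \<Rightarrow> real" where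
  "legendre_basis_entry p d k l =
     integral {-1..1} (\<lambda>\<tau>. integral {-1..1} (\<lambda>\<rho>.
        poly (p d) \<tau> * heaviside (\<tau> - \<rho>) * poly (p k) \<tau> * poly (p l) \<rho>))"

end

(*
  Put P_l(t) = integral of p_l over [-1, t] and Q(t) = integral of p_d p_k over [t, 1].
  Integrating out the Heaviside factor gives b_kl = <p_d P_l, p_k>, and integration by
  parts turns this into b_kl = <Q, p_l>. As p_d P_l and Q are polynomials of degree
  d + l + 1 and d + k + 1, orthogonality kills b_kl unless |k - l| <= d + 1, so a row has
  at most 2d + 3 nonzero entries. By Bessel their squares sum to at most |Q|^2, and
  Cauchy-Schwarz on [t, 1] gives Q(t)^2 <= integral of p_d^2 over [t, 1], which is at most 1,
  and equals (1 - t)/2 when d = 0. Hence |Q|^2 <= 2, resp. <= 1, and Cauchy-Schwarz over the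
  nonzero entries bounds the row sum by sqrt (2 (2d + 3)) <= 3d + 2, resp. sqrt 3 <= 2.
*)

theory Submission
  imports Defs
begin

definition poly_antideriv :: "'a::field_char_0 poly \<Rightarrow> 'a poly" where
  "poly_antideriv q = (\<Sum>i\<le>degree q. monom (coeff q i / of_nat (Suc i)) (Suc i))"

lemma pderiv_poly_antideriv [simp]: "pderiv (poly_antideriv q) = q"
proof -
  have pderiv_sum: "pderiv (sum f A) = (\<Sum>x\<in>A. pderiv (f x))" for f :: "nat \<Rightarrow> 'a poly" and A
    using higher_pderiv_sum[where n = 1] by simp
  have "pderiv (poly_antideriv q) = (\<Sum>i\<le>degree q. monom (coeff q i) i)"
    unfolding poly_antideriv_def pderiv_sum pderiv_monom
    by (intro sum.cong) (auto simp del: of_nat_Suc)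
  then show ?thesis
    by (simp add: poly_as_sum_of_monoms)
qed

lemma degree_poly_antideriv_le: "degree (poly_antideriv q) \<le> Suc (degree q)"
  unfolding poly_antideriv_def
  by (rule degree_sum_le) (auto intro: order.trans[OF degree_monom_le])

lemma poly_mult_integrable_on [intro, simp]:
  "(\<lambda>x. poly (q :: real poly) x * poly r x) integrable_on {a..b}"
  by (intro integrable_continuous_interval continuous_intros)

lemma integral_poly_pderiv:
  fixes r :: "real poly"
  assumes "a \<le> b"
  shows "integral {a..b} (poly (pderiv r)) = poly r b - poly r a"
proof (rule integral_unique)
  show "(poly (pderiv r) has_integral poly r b - poly r a) {a..b}"
    by (rule fundamental_theorem_of_calculus[OF assms])
       (auto intro!: DERIV_subset[OF poly_DERIV] simp flip: has_real_derivative_iff_has_vector_derivative)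
qed

lemma integral_poly:
  fixes q :: "real poly"
  assumes "a \<le> b"
  shows "integral {a..b} (poly q) = poly (poly_antideriv q) b - poly (poly_antideriv q) a"
  using integral_poly_pderiv[OF assms, of "poly_antideriv q"] by simp

definition lower_primitive :: "real poly \<Rightarrow> real poly" where
  "lower_primitive q = poly_antideriv q - [:poly (poly_antideriv q) (-1):]"

definition upper_primitive :: "real poly \<Rightarrow> real poly" where
  "upper_primitive q = [:poly (poly_antideriv q) 1:] - poly_antideriv q"

lemma poly_lower_primitive: "-1 \<le> x \<Longrightarrow> poly (lower_primitive q) x = integral {-1..x} (poly q)"
  by (simp add: lower_primitive_def integral_poly)

lemma poly_upper_primitive: "x \<le> 1 \<Longrightarrow> poly (upper_primitive q) x = integral {x..1} (poly q)"
  by (simp add: upper_primitive_def integral_poly)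

lemma pderiv_lower_primitive [simp]: "pderiv (lower_primitive q) = q"
  by (simp add: lower_primitive_def pderiv_diff)

lemma pderiv_upper_primitive [simp]: "pderiv (upper_primitive q) = - q"
  by (simp add: upper_primitive_def pderiv_diff)

lemma poly_lower_primitive_minus_one [simp]: "poly (lower_primitive q) (-1) = 0"
  by (simp add: lower_primitive_def)

lemma poly_upper_primitive_one [simp]: "poly (upper_primitive q) 1 = 0"
  by (simp add: upper_primitive_def)

lemma degree_lower_primitive_le: "degree (lower_primitive q) \<le> Suc (degree q)"
  unfolding lower_primitive_def
  by (rule degree_diff_le) (use degree_poly_antideriv_le in auto)

lemma degree_upper_primitive_le: "degree (upper_primitive q) \<le> Suc (degree q)"
  unfolding upper_primitive_def
  by (rule degree_diff_le) (use degree_poly_antideriv_le in auto)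

definition poly_inner :: "real poly \<Rightarrow> real poly \<Rightarrow> real" where
  "poly_inner q r = integral {-1..1} (\<lambda>x. poly q x * poly r x)"

lemma poly_inner_commute: "poly_inner q r = poly_inner r q"
  by (simp add: poly_inner_def mult.commute)

lemma poly_inner_add_left: "poly_inner (q1 + q2) r = poly_inner q1 r + poly_inner q2 r"
  by (simp add: poly_inner_def distrib_right integral_add)

lemma poly_inner_diff_left: "poly_inner (q1 - q2) r = poly_inner q1 r - poly_inner q2 r"
  by (simp add: poly_inner_def left_diff_distrib integral_diff)

lemma poly_inner_diff_right: "poly_inner q (r1 - r2) = poly_inner q r1 - poly_inner q r2"
  by (metis poly_inner_commute poly_inner_diff_left)

lemma poly_inner_smult_left: "poly_inner (smult c q) r = c * poly_inner q r"
  by (simp add: poly_inner_def mult.assoc)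

lemma poly_inner_0_left [simp]: "poly_inner 0 r = 0"
  by (simp add: poly_inner_def)

lemma poly_inner_sum_left: "poly_inner (sum f S) r = (\<Sum>i\<in>S. poly_inner (f i) r)"
  by (induction S rule: infinite_finite_induct) (auto simp: poly_inner_add_left)

lemma poly_inner_self_nonneg: "0 \<le> poly_inner q q"
  unfolding poly_inner_def by (rule integral_nonneg) auto

lemma integral_square_le_poly_inner:
  assumes "-1 \<le> x"
  shows "integral {x..1} (\<lambda>t. (poly q t)\<^sup>2) \<le> poly_inner q q"
  unfolding poly_inner_def power2_eq_square
  by (rule integral_subset_le) (use assms in auto)

lemma poly_inner_lower_upper_primitive:
  "poly_inner (lower_primitive f) g = poly_inner f (upper_primitive g)"
proof -
  define h where "h = lower_primitive f * upper_primitive g"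
  have "pderiv h = f * upper_primitive g - lower_primitive f * g"
    by (simp add: h_def pderiv_mult algebra_simps)
  have "0 = poly h 1 - poly h (-1)"
    by (simp add: h_def)
  also have "\<dots> = integral {-1..1} (poly (pderiv h))"
    by (simp add: integral_poly_pderiv)
  also have "\<dots> = integral {-1..1}
      (\<lambda>x. poly f x * poly (upper_primitive g) x - poly (lower_primitive f) x * poly g x)"
    by (rule arg_cong[where f = "integral _"]) (simp add: \<open>pderiv h = _\<close> fun_eq_iff)
  also have "\<dots> = poly_inner f (upper_primitive g) - poly_inner (lower_primitive f) g"
    by (simp add: poly_inner_def integral_diff)
  finally show ?thesis
    by simp
qed

lemma legendre_basis_entry_eq_lower_primitive:
  "legendre_basis_entry p d k l = poly_inner (p d * lower_primitive (p l)) (p k)"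
  unfolding legendre_basis_entry_def poly_inner_def
proof (rule integral_cong)
  fix \<tau> :: real
  assume \<tau>: "\<tau> \<in> {-1..1}"
  define c where "c = poly (p d) \<tau> * poly (p k) \<tau>"
  have "integral {-1..1} (\<lambda>\<rho>. poly (p d) \<tau> * heaviside (\<tau> - \<rho>) * poly (p k) \<tau> * poly (p l) \<rho>)
      = integral {-1..1} (\<lambda>\<rho>. if \<rho> \<in> {..\<tau>} then c * poly (p l) \<rho> else 0)"
    by (rule integral_cong) (auto simp: heaviside_def c_def)
  also have "\<dots> = integral ({..\<tau>} \<inter> {-1..1}) (\<lambda>\<rho>. c * poly (p l) \<rho>)"
    by (rule integral_restrict_Int)
  also have "{..\<tau>} \<inter> {-1..1} = {-1..\<tau>}"
    using \<tau> by auto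
  also have "integral {-1..\<tau>} (\<lambda>\<rho>. c * poly (p l) \<rho>) = c * poly (lower_primitive (p l)) \<tau>"
    using \<tau> by (simp add: poly_lower_primitive)
  finally show "integral {-1..1} (\<lambda>\<rho>. poly (p d) \<tau> * heaviside (\<tau> - \<rho>) * poly (p k) \<tau> * poly (p l) \<rho>)
      = poly (p d * lower_primitive (p l)) \<tau> * poly (p k) \<tau>"
    by (simp add: c_def)
qed

lemma legendre_basis_entry_eq_upper_primitive:
  "legendre_basis_entry p d k l = poly_inner (upper_primitive (p d * p k)) (p l)"
proof -
  have "legendre_basis_entry p d k l = poly_inner (lower_primitive (p l)) (p d * p k)"
    by (simp add: legendre_basis_entry_eq_lower_primitive poly_inner_def mult_ac)
  then show ?thesis
    by (simp add: poly_inner_lower_upper_primitive poly_inner_commute)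
qed

lemma orthonormal_legendre_degree: "orthonormal_legendre p \<Longrightarrow> degree (p k) = k"
  by (simp add: orthonormal_legendre_def)

lemma orthonormal_legendre_inner:
  "orthonormal_legendre p \<Longrightarrow> poly_inner (p k) (p l) = (if k = l then 1 else 0)"
  by (simp add: orthonormal_legendre_def poly_inner_def)

lemma poly_inner_orthonormal_legendre_eq_0:
  assumes "orthonormal_legendre p" and "degree q < l"
  shows "poly_inner q (p l) = 0"
proof -
  have "poly_inner q (p l) = 0" if "\<forall>i\<ge>n. coeff q i = 0" and "n \<le> l" for n q
    using that
  proof (induction n arbitrary: q)
    case 0
    then have "q = 0"
      by (simp add: poly_eq_iff)
    then show ?case
      by simp
  next
    case (Suc n)
    have deg: "degree (p n) = n" and "0 < lead_coeff (p n)"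
      using assms(1) unfolding orthonormal_legendre_def by blast+
    then have lc: "lead_coeff (p n) \<noteq> 0"
      by linarith
    define r where "r = q - smult (coeff q n / lead_coeff (p n)) (p n)"
    have "coeff r i = 0" if "i \<ge> n" for i
      using that Suc.prems(1) lc deg coeff_eq_0[of "p n" i]
      by (cases "i = n") (auto simp: r_def)
    then have "poly_inner r (p l) = 0"
      using Suc by simp
    moreover have "poly_inner (p n) (p l) = 0"
      using Suc.prems(2) orthonormal_legendre_inner[OF assms(1)] by simp
    ultimately show ?case
      by (simp add: r_def poly_inner_diff_left poly_inner_smult_left)
  qed
  from this[of "Suc (degree q)"] show ?thesis
    using assms(2) by (simp add: coeff_eq_0)
qed

lemma bessel_inequality:
  assumes orthonormal: "\<And>k l. poly_inner (p k) (p l) = (if k = l then 1 else 0)"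
    and "finite S"
  shows "(\<Sum>l\<in>S. (poly_inner q (p l))\<^sup>2) \<le> poly_inner q q"
proof -
  define b where "b l = poly_inner q (p l)" for l
  define s where "s = (\<Sum>l\<in>S. smult (b l) (p l))"
  have s_coeff: "poly_inner s (p m) = b m" if "m \<in> S" for m
    using that \<open>finite S\<close>
    by (simp add: s_def poly_inner_sum_left poly_inner_smult_left orthonormal if_distrib
        cong: if_cong)
  have s_inner: "poly_inner s r = (\<Sum>l\<in>S. b l * poly_inner (p l) r)" for r
    by (simp add: s_def poly_inner_sum_left poly_inner_smult_left)
  have "poly_inner s s = (\<Sum>l\<in>S. (b l)\<^sup>2)"
    unfolding s_inner[of s] by (simp add: poly_inner_commute[of "p _" s] s_coeff power2_eq_square)
  moreover have "poly_inner s q = (\<Sum>l\<in>S. (b l)\<^sup>2)"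
    by (simp add: s_inner poly_inner_commute[of "p _" q] b_def power2_eq_square)
  moreover have "0 \<le> poly_inner (q - s) (q - s)"
    by (rule poly_inner_self_nonneg)
  ultimately show ?thesis
    by (simp add: poly_inner_diff_left poly_inner_diff_right poly_inner_commute[of q s] b_def)
qed

lemma discriminant_le_of_quadratic_nonneg:
  fixes A B C :: real
  assumes nonneg: "\<And>t. 0 \<le> A + 2 * t * B + t\<^sup>2 * C" and "0 \<le> C"
  shows "B\<^sup>2 \<le> A * C"
proof (cases "C = 0")
  case True
  have "B = 0"
  proof (rule ccontr)
    assume "B \<noteq> 0"
    then have "A + 2 * (- (A + 1) / (2 * B)) * B + (- (A + 1) / (2 * B))\<^sup>2 * C = -1"
      using True by (simp add: field_simps)
    then show False
      using nonneg[of "- (A + 1) / (2 * B)"] by simp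
  qed
  then show ?thesis
    using True by simp
next
  case False
  then have "0 < C"
    using \<open>0 \<le> C\<close> by simp
  have "A + 2 * (- B / C) * B + (- B / C)\<^sup>2 * C = A - B\<^sup>2 / C"
    using \<open>0 < C\<close> by (simp add: field_simps power2_eq_square)
  then have "0 \<le> A - B\<^sup>2 / C"
    using nonneg[of "- B / C"] by simp
  then show ?thesis
    using \<open>0 < C\<close> by (simp add: field_simps)
qed

lemma Cauchy_Schwarz_integral:
  fixes f g :: "'a::euclidean_space \<Rightarrow> real"
  assumes f2: "(\<lambda>x. (f x)\<^sup>2) integrable_on S" and g2: "(\<lambda>x. (g x)\<^sup>2) integrable_on S"
    and fg: "(\<lambda>x. f x * g x) integrable_on S"
  shows "(integral S (\<lambda>x. f x * g x))\<^sup>2 \<le> integral S (\<lambda>x. (f x)\<^sup>2) * integral S (\<lambda>x. (g x)\<^sup>2)"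
proof (rule discriminant_le_of_quadratic_nonneg)
  fix t :: real
  have integrable: "(\<lambda>x. (f x)\<^sup>2 + 2 * t * (f x * g x) + t\<^sup>2 * (g x)\<^sup>2) integrable_on S"
    using integrable_cmul[OF fg, of "2 * t"] integrable_cmul[OF g2, of "t\<^sup>2"]
    by (intro integrable_add f2) simp_all
  have "0 \<le> integral S (\<lambda>x. (f x)\<^sup>2 + 2 * t * (f x * g x) + t\<^sup>2 * (g x)\<^sup>2)"
  proof (rule integral_nonneg[OF integrable])
    fix x
    have "(f x)\<^sup>2 + 2 * t * (f x * g x) + t\<^sup>2 * (g x)\<^sup>2 = (f x + t * g x)\<^sup>2"
      by (simp add: power2_eq_square algebra_simps)
    then show "0 \<le> (f x)\<^sup>2 + 2 * t * (f x * g x) + t\<^sup>2 * (g x)\<^sup>2"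
      by simp
  qed
  also have "\<dots> = integral S (\<lambda>x. (f x)\<^sup>2) + 2 * t * integral S (\<lambda>x. f x * g x)
      + t\<^sup>2 * integral S (\<lambda>x. (g x)\<^sup>2)"
    using integrable_cmul[OF fg, of "2 * t"] integrable_cmul[OF g2, of "t\<^sup>2"]
    by (simp add: integral_add integrable_add f2)
  finally show "0 \<le> integral S (\<lambda>x. (f x)\<^sup>2) + 2 * t * integral S (\<lambda>x. f x * g x)
      + t\<^sup>2 * integral S (\<lambda>x. (g x)\<^sup>2)" .
next
  show "0 \<le> integral S (\<lambda>x. (g x)\<^sup>2)"
    by (rule integral_nonneg[OF g2]) simp
qed

lemma orthonormal_legendre_0_square:
  assumes "orthonormal_legendre p"
  shows "(poly (p 0) x)\<^sup>2 = 1 / 2"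
proof -
  obtain c where c: "p 0 = [:c:]"
    using orthonormal_legendre_degree[OF assms, of 0] degree_eq_zeroE by blast
  have "2 * c\<^sup>2 = 1"
    using orthonormal_legendre_inner[OF assms, of 0 0] by (simp add: poly_inner_def c power2_eq_square)
  then show ?thesis
    by (simp add: c)
qed

lemma upper_primitive_orthonormal_legendre_square_le:
  assumes "orthonormal_legendre p" and x: "x \<in> {-1..1}"
  shows "(poly (upper_primitive (p d * p k)) x)\<^sup>2 \<le> integral {x..1} (\<lambda>t. (poly (p d) t)\<^sup>2)"
proof -
  have "(poly (upper_primitive (p d * p k)) x)\<^sup>2
      = (integral {x..1} (\<lambda>t. poly (p d) t * poly (p k) t))\<^sup>2"
    using x by (simp add: poly_upper_primitive poly_mult[abs_def])
  also have "\<dots> \<le> integral {x..1} (\<lambda>t. (poly (p d) t)\<^sup>2) * integral {x..1} (\<lambda>t. (poly (p k) t)\<^sup>2)"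
    by (rule Cauchy_Schwarz_integral) (simp_all add: power2_eq_square)
  also have "\<dots> \<le> integral {x..1} (\<lambda>t. (poly (p d) t)\<^sup>2)"
  proof (rule mult_left_le)
    show "integral {x..1} (\<lambda>t. (poly (p k) t)\<^sup>2) \<le> 1"
      using integral_square_le_poly_inner[of x "p k"] x orthonormal_legendre_inner[OF assms(1)]
      by simp
    show "0 \<le> integral {x..1} (\<lambda>t. (poly (p d) t)\<^sup>2)"
      by (rule integral_nonneg) (simp_all add: power2_eq_square)
  qed
  finally show ?thesis .
qed

lemma has_integral_one_minus_half: "((\<lambda>x::real. (1 - x) / 2) has_integral 1) {-1..1}"
  by (rule fundamental_theorem_of_calculus[where f = "\<lambda>x. (2 * x - x\<^sup>2) / 4", THEN has_integral_eq_rhs])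
     (auto intro!: derivative_eq_intros simp flip: has_real_derivative_iff_has_vector_derivative)

lemma poly_inner_upper_primitive_orthonormal_legendre_le:
  fixes d k :: nat
  assumes "orthonormal_legendre p"
  defines "Q \<equiv> upper_primitive (p d * p k)"
  shows "poly_inner Q Q \<le> (if d = 0 then 1 else 2)"
proof -
  have Q_le: "(poly Q x)\<^sup>2 \<le> integral {x..1} (\<lambda>t. (poly (p d) t)\<^sup>2)" if "x \<in> {-1..1}" for x
    unfolding Q_def using assms(1) that by (rule upper_primitive_orthonormal_legendre_square_le)
  have Q_inner: "poly_inner Q Q = integral {-1..1} (\<lambda>x. (poly Q x)\<^sup>2)"
    by (simp add: poly_inner_def power2_eq_square)
  show ?thesis
  proof (cases "d = 0")
    case True
    have "poly_inner Q Q \<le> integral {-1..1} (\<lambda>x. (1 - x) / 2)"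
      unfolding Q_inner
    proof (rule integral_le)
      fix x :: real
      assume x: "x \<in> {-1..1}"
      then have "integral {x..1} (\<lambda>t. (poly (p d) t)\<^sup>2) = (1 - x) / 2"
        using True by (simp add: orthonormal_legendre_0_square[OF assms(1)])
      then show "(poly Q x)\<^sup>2 \<le> (1 - x) / 2"
        using Q_le[OF x] by simp
    qed (use has_integral_one_minus_half in \<open>auto simp: power2_eq_square has_integral_integrable\<close>)
    also have "\<dots> = 1"
      by (rule integral_unique[OF has_integral_one_minus_half])
    finally show ?thesis
      using True by simp
  next
    case False
    have "poly_inner Q Q \<le> integral {-1..1} (\<lambda>x::real. 1)"
      unfolding Q_inner
    proof (rule integral_le)
      fix x :: real
      assume x: "x \<in> {-1..1}"
      have "integral {x..1} (\<lambda>t. (poly (p d) t)\<^sup>2) \<le> 1"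
        using x integral_square_le_poly_inner[of x "p d"] orthonormal_legendre_inner[OF assms(1)]
        by simp
      then show "(poly Q x)\<^sup>2 \<le> 1"
        using Q_le[OF x] by simp
    qed (auto simp: power2_eq_square)
    then show ?thesis
      using False by simp
  qed
qed

lemma legendre_basis_entry_eq_0:
  assumes "orthonormal_legendre p" and "l \<notin> {k - (d + 1)..k + d + 1}"
  shows "legendre_basis_entry p d k l = 0"
proof (cases "k + d + 1 < l")
  case True
  have "degree (upper_primitive (p d * p k)) \<le> Suc (d + k)"
    using degree_upper_primitive_le[of "p d * p k"] degree_mult_le[of "p d" "p k"]
    by (simp add: orthonormal_legendre_degree[OF assms(1)])
  then show ?thesis
    using True assms(1)
    by (simp add: legendre_basis_entry_eq_upper_primitive poly_inner_orthonormal_legendre_eq_0)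
next
  case False
  then have "l + d + 1 < k"
    using assms(2) by auto
  have "degree (p d * lower_primitive (p l)) \<le> d + Suc l"
    using degree_lower_primitive_le[of "p l"] degree_mult_le[of "p d" "lower_primitive (p l)"]
    by (simp add: orthonormal_legendre_degree[OF assms(1)])
  then show ?thesis
    using \<open>l + d + 1 < k\<close> assms(1)
    by (simp add: legendre_basis_entry_eq_lower_primitive poly_inner_orthonormal_legendre_eq_0)
qed

lemma sum_legendre_basis_entry_squares_le:
  assumes "orthonormal_legendre p" and "finite S"
  shows "(\<Sum>l\<in>S. (legendre_basis_entry p d k l)\<^sup>2) \<le> (if d = 0 then 1 else 2)"
proof -
  have "(\<Sum>l\<in>S. (legendre_basis_entry p d k l)\<^sup>2)
      \<le> poly_inner (upper_primitive (p d * p k)) (upper_primitive (p d * p k))"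
    unfolding legendre_basis_entry_eq_upper_primitive
    by (rule bessel_inequality[OF orthonormal_legendre_inner[OF assms(1)] assms(2)])
  also have "\<dots> \<le> (if d = 0 then 1 else 2)"
    by (rule poly_inner_upper_primitive_orthonormal_legendre_le[OF assms(1)])
  finally show ?thesis .
qed

lemma band_width_bound_le_square: "(if d = 0 then 1 else 2) * real (2 * d + 3) \<le> (3 * real d + 2)\<^sup>2"
proof (cases "d = 0")
  case False
  then have "1 \<le> real d"
    by simp
  then have "2 * real (2 * d + 3) \<le> 5 * (3 * real d + 2)"
    by simp
  also have "\<dots> \<le> (3 * real d + 2) * (3 * real d + 2)"
    using \<open>1 \<le> real d\<close> by (intro mult_right_mono) auto
  finally show ?thesis
    using False by (simp add: power2_eq_square)
qed simp

theorem lemma3p5: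
  fixes p :: "nat \<Rightarrow> real poly" and d :: nat
  assumes "orthonormal_legendre p"
  shows "\<forall>k. summable (\<lambda>l. \<bar>legendre_basis_entry p d k l\<bar>) \<and>
             (\<Sum>l. \<bar>legendre_basis_entry p d k l\<bar>) \<le> 3 * real d + 2"
proof
  fix k
  define b where "b = legendre_basis_entry p d k"
  define S where "S = {k - (d + 1)..k + d + 1}"
  have "finite S" and card_S: "card S \<le> 2 * d + 3"
    by (simp_all add: S_def)
  have outside: "\<bar>b l\<bar> = 0" if "l \<notin> S" for l
    using legendre_basis_entry_eq_0[OF assms] that by (simp add: b_def S_def)
  have "(\<Sum>l\<in>S. \<bar>b l\<bar>)\<^sup>2 \<le> (\<Sum>l\<in>S. \<bar>b l\<bar>\<^sup>2) * card S"
    by (rule sum_squared_le_sum_of_squares)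
  also have "\<dots> \<le> (if d = 0 then 1 else 2) * real (2 * d + 3)"
    using sum_legendre_basis_entry_squares_le[OF assms \<open>finite S\<close>, of d k] card_S
    by (intro mult_mono) (auto simp: b_def intro: sum_nonneg)
  also have "\<dots> \<le> (3 * real d + 2)\<^sup>2"
    by (rule band_width_bound_le_square)
  finally have "(\<Sum>l\<in>S. \<bar>b l\<bar>) \<le> 3 * real d + 2"
    by (rule power2_le_imp_le) simp
  moreover have "summable (\<lambda>l. \<bar>b l\<bar>)" and "(\<Sum>l. \<bar>b l\<bar>) = (\<Sum>l\<in>S. \<bar>b l\<bar>)"
    using outside \<open>finite S\<close> by (simp_all add: summable_finite suminf_finite)
  ultimately show "summable (\<lambda>l. \<bar>legendre_basis_entry p d k l\<bar>) \<and>
      (\<Sum>l. \<bar>legendre_basis_entry p d k l\<bar>) \<le> 3 * real d + 2"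
    by (simp add: b_def)
qed

end
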